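(* For $n$ large enough, every linear trifferent code of length $n$ has size at most $3^{n/4.55}$.
   Context: A linear trifferent code of length $n$ is a linear subspace $C\subseteq\mathbb{F}_3^n$ such that for any three distinct $x,y,z\in C$ there is a coordinate $i$ with $\{x_i,y_i,z_i\}=\mathbb{F}_3$. *)

theory Defs
  imports Complex_Main "HOL-Library.Numeral_Type"
begin

text \<open>The field F_3 is rendered as the type 3 from HOL-Library.Numeral_Type
(integers mod 3, a comm_ring_1 with exactly three elements 0, 1, 2).
A word of length n over F_3 is a function nat => 3 whose support lies in {0..<n};
F3_space n is thus a copy of F_3^n.\<close>

definition F3_space :: "nat \<Rightarrow> (nat \<Rightarrow> 3) set" where
  "F3_space n = {x. \<forall>i\<ge>n. x i = 0}"

definition linear_code :: "nat \<Rightarrow> (nat \<Rightarrow> 3) set \<Rightarrow> bool" where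
  "linear_code n C \<longleftrightarrow> C \<subseteq> F3_space n \<and> (\<lambda>_. 0) \<in> C \<and>
     (\<forall>x\<in>C. \<forall>y\<in>C. (\<lambda>i. x i + y i) \<in> C) \<and>
     (\<forall>c::3. \<forall>x\<in>C. (\<lambda>i. c * x i) \<in> C)"

definition trifferent :: "nat \<Rightarrow> (nat \<Rightarrow> 3) set \<Rightarrow> bool" where
  "trifferent n C \<longleftrightarrow> (\<forall>x\<in>C. \<forall>y\<in>C. \<forall>z\<in>C. x \<noteq> y \<and> y \<noteq> z \<and> x \<noteq> z \<longrightarrow>
     (\<exists>i<n. {x i, y i, z i} = (UNIV :: 3 set)))"

end

theory Submission
  imports Defs "HOL-Decision_Procs.Approximation_Bounds"
begin

text \<open>Fix a nonzero codeword c of a linear trifferent code C and a coordinate i0 with c(i0) \<noteq> 0. For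
  every nonzero x in C with x(i0) = 0, the codewords 0, c and x + c are separated at some coordinate,
  and this forces x(j) = c(j) for some other j in the support of c. So the polynomial
  prod (x(j) - c(j)) over the rest of the support vanishes on the hyperplane section
  {x \<in> C. x(i0) = 0} everywhere except at 0. As a polynomial of degree less than 2 dim V sums to
  zero over a subspace V, this gives |C|^2 \<le> 3^(wt c + 1): a trifferent code with more than
  3^(20n/91) words has minimum weight at least 40n/91 - 1.

  The characters chi(x \<cdot> y) diagonalise the Hamming graph on F_3^n with eigenvalues 2n - 3 wt(y).
  A Delsarte-type Fourier argument therefore bounds a linear code of minimum weight d by
  |C| \<le> 3 d |B| whenever some nonnegative f supported on a Hamming ball B satisfies
  A f \<ge> \<lambda> f with \<lambda> \<ge> 2n - 3d + 1. A radial test function living on the weights r, ..., r + 198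
  with r \<approx> 0.05225 n does this for d = 40n/91 - 1, and then 3 d |B| \<le> 3 d 36^(r+198) (19/18)^n,
  which is eventually smaller than 3^(20n/91).\<close>

section \<open>The field with three elements\<close>

lemma F3_cases: "(x::3) = 0 \<or> x = 1 \<or> x = 2"
proof (cases x rule: bit1.cases)
  case (1 z)
  then have "z = 0 \<or> z = 1 \<or> z = 2" by auto
  then show ?thesis using 1 by auto
qed

lemma UNIV_F3: "(UNIV :: 3 set) = {0, 1, 2}"
  using F3_cases by auto

lemma sum_UNIV_F3: "(\<Sum>t\<in>UNIV. g t) = g (0::3) + g 1 + g 2"
  unfolding UNIV_F3 by (simp add: add.assoc)

lemma sum_UNIV_F3_power: "k \<le> 1 \<Longrightarrow> (\<Sum>t\<in>UNIV. (t::3) ^ k) = 0"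
  by (cases k) (auto simp: sum_UNIV_F3)

lemma F3_numerals: "(3::3) = 0" "(4::3) = 1" "(- 1::3) = 2" "(- 2::3) = 1" "(- 4::3) = 2"
  by simp_all

lemma F3_mult_self: "(x::3) \<noteq> 0 \<Longrightarrow> x * x = 1"
  using F3_cases[of x] by auto

lemma F3_mult_nonzero: "(p::3) \<noteq> 0 \<Longrightarrow> q \<noteq> 0 \<Longrightarrow> p * q \<noteq> 0"
  using F3_cases[of p] F3_cases[of q] by auto

lemma F3_prod_nonzero: "finite A \<Longrightarrow> (\<And>a. a \<in> A \<Longrightarrow> f a \<noteq> (0::3)) \<Longrightarrow> prod f A \<noteq> 0"
  by (induction A rule: finite_induct) (auto simp: F3_mult_nonzero)

lemma F3_triple_eq_UNIV:
  assumes "{0, p, q} = (UNIV :: 3 set)"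
  shows "p \<noteq> 0 \<and> q = p + p"
proof -
  have "card {0, p, q} = 3"
    using assms by simp
  then have "p \<noteq> 0" "q \<noteq> 0" "p \<noteq> q"
    by (auto simp: card_insert_if split: if_splits)
  then show ?thesis
    using F3_cases[of p] F3_cases[of q] by auto
qed

section \<open>Words of length n and their Hamming weight\<close>

lemma F3_space_0: "F3_space 0 = {\<lambda>_. 0}"
  unfolding F3_space_def by auto

lemma F3_space_Suc: "F3_space (Suc n) = (\<lambda>(x, a). x(n := a)) ` (F3_space n \<times> UNIV)"
proof
  show "F3_space (Suc n) \<subseteq> (\<lambda>(x, a). x(n := a)) ` (F3_space n \<times> UNIV)"
  proof
    fix y assume "y \<in> F3_space (Suc n)"
    then have "y(n := 0) \<in> F3_space n" "y = (y(n := 0))(n := y n)"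
      unfolding F3_space_def by auto
    then show "y \<in> (\<lambda>(x, a). x(n := a)) ` (F3_space n \<times> UNIV)"
      by (intro image_eqI[of y _ "(y(n := 0), y n)"]) auto
  qed
  show "(\<lambda>(x, a). x(n := a)) ` (F3_space n \<times> UNIV) \<subseteq> F3_space (Suc n)"
    unfolding F3_space_def by auto
qed

lemma inj_on_F3_space_Suc: "inj_on (\<lambda>(x, a). x(n := a)) (F3_space n \<times> UNIV)"
proof (rule inj_onI, clarify)
  fix x y :: "nat \<Rightarrow> 3" and a b
  assume "x \<in> F3_space n" "y \<in> F3_space n" and eq: "x(n := a) = y(n := b)"
  then have "x n = y n"
    unfolding F3_space_def by simp
  with eq show "x = y \<and> a = b"
    by (metis fun_upd_idem_iff fun_upd_same fun_upd_upd)
qed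

lemma finite_F3_space: "finite (F3_space n)"
  by (induction n) (simp_all add: F3_space_0 F3_space_Suc)

definition weight :: "nat \<Rightarrow> (nat \<Rightarrow> 3) \<Rightarrow> nat" where
  "weight n x = card {i. i < n \<and> x i \<noteq> 0}"

lemma weight_le: "weight n x \<le> n"
  unfolding weight_def using card_mono[of "{..<n}" "{i. i < n \<and> x i \<noteq> 0}"] by auto

lemma sum_if_eq_0_weight:
  "(\<Sum>i<n. if x i = 0 then p else q) = real (n - weight n x) * p + real (weight n x) * q"
proof -
  have "{..<n} \<inter> - {i. x i = 0} = {i. i < n \<and> x i \<noteq> 0}"
    by auto
  moreover have "card ({..<n} \<inter> {i. x i = 0}) + card ({..<n} \<inter> - {i. x i = 0}) = n"
    by (subst card_Un_disjoint[symmetric]) (auto simp: Int_Un_distrib[symmetric])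
  ultimately show ?thesis
    unfolding weight_def by (simp add: sum.If_cases)
qed

lemma weight_Suc_fun_upd:
  assumes "x \<in> F3_space n"
  shows "weight (Suc n) (x(n := a)) = weight n x + (if a = 0 then 0 else 1)"
proof -
  have "{i. i < Suc n \<and> (x(n := a)) i \<noteq> 0} = {i. i < n \<and> x i \<noteq> 0} \<union> (if a = 0 then {} else {n})"
    using assms unfolding F3_space_def by (auto simp: less_Suc_eq)
  then show ?thesis
    unfolding weight_def by (cases "a = 0") auto
qed

lemma sum_power_weight:
  fixes z :: "'a::comm_semiring_1"
  shows "(\<Sum>x\<in>F3_space n. z ^ weight n x) = (1 + 2 * z) ^ n"
proof (induction n)
  case 0
  then show ?case
    by (simp add: F3_space_0 weight_def)
next
  case (Suc n)
  have "(\<Sum>x\<in>F3_space (Suc n). z ^ weight (Suc n) x)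
      = (\<Sum>p\<in>F3_space n \<times> UNIV. z ^ weight (Suc n) ((\<lambda>(x, a). x(n := a)) p))"
    unfolding F3_space_Suc by (rule sum.reindex[OF inj_on_F3_space_Suc, unfolded comp_def])
  also have "\<dots> = (\<Sum>(x, a)\<in>F3_space n \<times> UNIV. z ^ weight (Suc n) (x(n := a)))"
    by (simp add: case_prod_beta)
  also have "\<dots> = (\<Sum>x\<in>F3_space n. \<Sum>a\<in>UNIV. z ^ weight (Suc n) (x(n := a)))"
    by (rule sum.cartesian_product[symmetric])
  also have "\<dots> = (\<Sum>x\<in>F3_space n. z ^ weight n x * (1 + 2 * z))"
    by (intro sum.cong refl) (simp add: sum_UNIV_F3 weight_Suc_fun_upd algebra_simps mult_2)
  also have "\<dots> = (1 + 2 * z) ^ Suc n"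
    using Suc by (simp add: sum_distrib_right[symmetric] mult.commute)
  finally show ?case .
qed

lemma card_weight_ball_le:
  fixes z :: real
  assumes "0 < z" "z \<le> 1"
  shows "real (card {x\<in>F3_space n. weight n x \<le> R}) * z ^ R \<le> (1 + 2 * z) ^ n"
proof -
  have "real (card {x\<in>F3_space n. weight n x \<le> R}) * z ^ R = (\<Sum>x\<in>{x\<in>F3_space n. weight n x \<le> R}. z ^ R)"
    by simp
  also have "\<dots> \<le> (\<Sum>x\<in>{x\<in>F3_space n. weight n x \<le> R}. z ^ weight n x)"
    using assms by (intro sum_mono power_decreasing) auto
  also have "\<dots> \<le> (\<Sum>x\<in>F3_space n. z ^ weight n x)"
    using assms by (intro sum_mono2[OF finite_F3_space]) auto
  finally show ?thesis
    by (simp add: sum_power_weight)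
qed

section \<open>Subspaces and a vanishing sum\<close>

definition F3_subspace :: "(nat \<Rightarrow> 3) set \<Rightarrow> bool" where
  "F3_subspace V \<longleftrightarrow> (\<lambda>_. 0) \<in> V \<and> (\<forall>x\<in>V. \<forall>y\<in>V. (\<lambda>i. x i + y i) \<in> V) \<and>
     (\<forall>c. \<forall>x\<in>V. (\<lambda>i. c * x i) \<in> V)"

lemma linear_code_iff: "linear_code n C \<longleftrightarrow> C \<subseteq> F3_space n \<and> F3_subspace C"
  unfolding linear_code_def F3_subspace_def by blast

lemma finite_linear_code: "linear_code n C \<Longrightarrow> finite C"
  unfolding linear_code_iff using finite_F3_space finite_subset by blast

lemma F3_subspace_zero: "F3_subspace V \<Longrightarrow> (\<lambda>_. 0) \<in> V"
  unfolding F3_subspace_def by blast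

lemma F3_subspace_add: "F3_subspace V \<Longrightarrow> x \<in> V \<Longrightarrow> y \<in> V \<Longrightarrow> (\<lambda>i. x i + y i) \<in> V"
  unfolding F3_subspace_def by blast

lemma F3_subspace_scale: "F3_subspace V \<Longrightarrow> x \<in> V \<Longrightarrow> (\<lambda>i. c * x i) \<in> V"
  unfolding F3_subspace_def by blast

lemma F3_subspace_hyperplane: "F3_subspace V \<Longrightarrow> F3_subspace {x\<in>V. x i = 0}"
  unfolding F3_subspace_def by auto

lemma F3_subspace_split:
  assumes V: "F3_subspace V" and u: "u \<in> V" "u i = 1"
  shows "bij_betw (\<lambda>(t, w) j. w j + t * u j) (UNIV \<times> {w\<in>V. w i = 0}) V"
proof (rule bij_betw_byWitness[where f' = "\<lambda>x. (x i, \<lambda>j. x j - x i * u j)"])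
  have sub: "(\<lambda>j. x j - c * u j) \<in> V" if "x \<in> V" for x c
    using F3_subspace_add[OF V that F3_subspace_scale[OF V u(1), of "- c"]] by simp
  show "\<forall>p\<in>UNIV \<times> {w\<in>V. w i = 0}. (\<lambda>x. (x i, \<lambda>j. x j - x i * u j)) ((\<lambda>(t, w) j. w j + t * u j) p) = p"
    using u by auto
  show "\<forall>x\<in>V. (\<lambda>(t, w) j. w j + t * u j) ((\<lambda>x. (x i, \<lambda>j. x j - x i * u j)) x) = x"
    by auto
  show "(\<lambda>(t, w) j. w j + t * u j) ` (UNIV \<times> {w\<in>V. w i = 0}) \<subseteq> V"
    using F3_subspace_add[OF V] F3_subspace_scale[OF V u(1)] by auto
  show "(\<lambda>x. (x i, \<lambda>j. x j - x i * u j)) ` V \<subseteq> UNIV \<times> {w\<in>V. w i = 0}"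
    using sub u by auto
qed

lemma card_F3_subspace_hyperplane:
  assumes V: "F3_subspace V" and v: "v \<in> V" "v i \<noteq> 0"
  shows "card V = 3 * card {w\<in>V. w i = 0}"
proof -
  have "(\<lambda>j. v i * v j) \<in> V" "v i * v i = 1"
    using F3_subspace_scale[OF V v(1)] F3_mult_self[OF v(2)] by auto
  from bij_betw_same_card[OF F3_subspace_split[OF V this]]
  show ?thesis by (simp add: card_cartesian_product)
qed

lemma sum_F3_subspace_split:
  assumes "F3_subspace V" "u \<in> V" "u i = 1"
  shows "(\<Sum>v\<in>V. g v) = (\<Sum>t\<in>UNIV. \<Sum>w\<in>{w\<in>V. w i = 0}. g (\<lambda>j. w j + t * u j))"
proof -
  have "(\<Sum>v\<in>V. g v) = (\<Sum>(t, w)\<in>UNIV \<times> {w\<in>V. w i = 0}. g (\<lambda>j. w j + t * u j))"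
    using sum.reindex_bij_betw[OF F3_subspace_split[OF assms], of g] by (simp add: case_prod_beta)
  also have "\<dots> = (\<Sum>t\<in>UNIV. \<Sum>w\<in>{w\<in>V. w i = 0}. g (\<lambda>j. w j + t * u j))"
    by (rule sum.cartesian_product[symmetric])
  finally show ?thesis .
qed

lemma F3_subspace_unit_coordinate:
  assumes V: "F3_subspace V" and "V \<noteq> {\<lambda>_. 0}"
  obtains u i where "u \<in> V" "u i = 1"
proof -
  obtain v where v: "v \<in> V" "v \<noteq> (\<lambda>_. 0)"
    using assms F3_subspace_zero[OF V] by blast
  then obtain i where "v i \<noteq> 0"
    by auto
  then show thesis
    using that[of "\<lambda>j. v i * v j" i] F3_subspace_scale[OF V v(1)] F3_mult_self by auto
qed

lemma sum_prod_add_scaled_expand: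
  fixes u a :: "'i \<Rightarrow> 'a::comm_ring_1" and W :: "('i \<Rightarrow> 'a) set"
  assumes J: "finite J"
  shows "(\<Sum>t\<in>T. \<Sum>w\<in>W. \<Prod>j\<in>J. w j + t * u j - a j)
    = (\<Sum>S\<in>Pow J. (\<Prod>j\<in>S. u j) * (\<Sum>t\<in>T. t ^ card S) * (\<Sum>w\<in>W. \<Prod>j\<in>J - S. w j - a j))"
proof -
  have expand: "(\<Prod>j\<in>J. w j + t * u j - a j)
      = (\<Sum>S\<in>Pow J. (\<Prod>j\<in>S. u j) * t ^ card S * (\<Prod>j\<in>J - S. w j - a j))" for w t
  proof -
    have "(\<Prod>j\<in>J. w j + t * u j - a j) = (\<Prod>j\<in>J. t * u j + (w j - a j))"
      by (simp add: algebra_simps)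
    also have "\<dots> = (\<Sum>S\<in>Pow J. (\<Prod>j\<in>S. t * u j) * (\<Prod>j\<in>J - S. w j - a j))"
      by (rule prod_add[OF J])
    also have "\<dots> = (\<Sum>S\<in>Pow J. (\<Prod>j\<in>S. u j) * t ^ card S * (\<Prod>j\<in>J - S. w j - a j))"
      by (rule sum.cong) (auto simp: prod.distrib mult_ac)
    finally show ?thesis .
  qed
  have "(\<Sum>t\<in>T. \<Sum>w\<in>W. \<Prod>j\<in>J. w j + t * u j - a j)
      = (\<Sum>t\<in>T. \<Sum>S\<in>Pow J. \<Sum>w\<in>W. (\<Prod>j\<in>S. u j) * t ^ card S * (\<Prod>j\<in>J - S. w j - a j))"
    unfolding expand by (rule sum.cong[OF refl], rule sum.swap)
  also have "\<dots> = (\<Sum>S\<in>Pow J. \<Sum>t\<in>T. \<Sum>w\<in>W. (\<Prod>j\<in>S. u j) * t ^ card S * (\<Prod>j\<in>J - S. w j - a j))"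
    by (rule sum.swap)
  also have "\<dots> = (\<Sum>S\<in>Pow J. (\<Prod>j\<in>S. u j) * (\<Sum>t\<in>T. t ^ card S) * (\<Sum>w\<in>W. \<Prod>j\<in>J - S. w j - a j))"
    by (simp only: mult.assoc sum_product sum_distrib_left[symmetric])
  finally show ?thesis .
qed

lemma power_3_card_Diff_le:
  assumes "finite J" "S \<subseteq> J" "2 \<le> card S"
  shows "9 * 3 ^ card (J - S) \<le> (3::nat) ^ card J"
proof -
  have "card J = card (J - S) + card S"
    using assms card_mono[of J S] by (simp add: card_Diff_subset finite_subset)
  moreover have "(3::nat) ^ 2 \<le> 3 ^ card S"
    using assms(3) by (rule power_increasing) simp
  ultimately show ?thesis by (simp add: power_add)
qed

text \<open>The hypothesis says that the degree |J| is less than 2 dim V. Splitting V as F_3 u + W,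
  every monomial of the expanded product picks up a factor sum over t of t^k, which vanishes for
  k \<le> 1, while the remaining monomials have degree less than 2 dim W.\<close>

lemma sum_prod_F3_subspace_eq_0:
  fixes V :: "(nat \<Rightarrow> 3) set"
  assumes "finite V" "F3_subspace V" "finite J" "3 ^ card J < card V ^ 2"
  shows "(\<Sum>v\<in>V. \<Prod>j\<in>J. v j - a j) = 0"
  using assms
proof (induction "card V" arbitrary: V J rule: less_induct)
  case less
  note fin = less.prems(1) and V = less.prems(2) and J = less.prems(3)
  have "V \<noteq> {\<lambda>_. 0}"
    using less.prems(4) by auto
  then obtain u i where u: "u \<in> V" "u i = 1"
    using F3_subspace_unit_coordinate[OF V] by blast
  define W where "W = {w\<in>V. w i = 0}"
  have card_V: "card V = 3 * card W"
    unfolding W_def by (rule card_F3_subspace_hyperplane[OF V u(1)]) (simp add: u(2))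
  have "finite W" "F3_subspace W" "card W < card V"
    using fin F3_subspace_hyperplane[OF V] F3_subspace_zero[OF V] card_V
    unfolding W_def by (auto simp: card_gt_0_iff)
  note IH = less.hyps[OF this(3,1,2)]
  have "(\<Sum>v\<in>V. \<Prod>j\<in>J. v j - a j) = (\<Sum>t\<in>UNIV. \<Sum>w\<in>W. \<Prod>j\<in>J. w j + t * u j - a j)"
    using sum_F3_subspace_split[OF V u, of "\<lambda>v. \<Prod>j\<in>J. v j - a j"] unfolding W_def by simp
  also have "\<dots> = (\<Sum>S\<in>Pow J. (\<Prod>j\<in>S. u j) * (\<Sum>t\<in>UNIV. t ^ card S) * (\<Sum>w\<in>W. \<Prod>j\<in>J - S. w j - a j))"
    by (rule sum_prod_add_scaled_expand[OF J])
  also have "\<dots> = 0"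
  proof (intro sum.neutral ballI)
    fix S assume S: "S \<in> Pow J"
    show "(\<Prod>j\<in>S. u j) * (\<Sum>t\<in>UNIV. t ^ card S) * (\<Sum>w\<in>W. \<Prod>j\<in>J - S. w j - a j) = 0"
    proof (cases "card S \<le> 1")
      case True
      then show ?thesis by (simp add: sum_UNIV_F3_power)
    next
      case False
      then have "9 * 3 ^ card (J - S) \<le> (3::nat) ^ card J"
        using S J by (intro power_3_card_Diff_le) auto
      also have "\<dots> < 9 * card W ^ 2"
        using less.prems(4) card_V by (simp add: power_mult_distrib)
      finally have "(\<Sum>w\<in>W. \<Prod>j\<in>J - S. w j - a j) = 0"
        using IH J by simp
      then show ?thesis by simp
    qed
  qed
  finally show ?case .
qed

section \<open>Trifferent codes have large minimum weight\<close>

lemma trifferent_zero_triple: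
  assumes "trifferent n C" "(\<lambda>_. 0) \<in> C" "c \<in> C" "y \<in> C"
    and "c \<noteq> (\<lambda>_. 0)" "y \<noteq> (\<lambda>_. 0)" "c \<noteq> y"
  shows "\<exists>i<n. c i \<noteq> 0 \<and> y i = c i + c i"
proof -
  obtain i where "i < n" "{(\<lambda>_. 0::3) i, c i, y i} = UNIV"
    using assms unfolding trifferent_def by metis
  then show ?thesis
    using F3_triple_eq_UNIV by auto
qed

lemma trifferent_agree_on_support:
  assumes C: "linear_code n C" "trifferent n C" and c: "c \<in> C" "c i0 \<noteq> 0"
    and x: "x \<in> C" "x \<noteq> (\<lambda>_. 0)" "x i0 = 0"
  shows "\<exists>j<n. j \<noteq> i0 \<and> c j \<noteq> 0 \<and> x j = c j"
proof -
  have V: "F3_subspace C"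
    using C(1) by (simp add: linear_code_iff)
  have "(\<lambda>i. x i + c i) \<in> C" "(\<lambda>i. x i + c i) \<noteq> (\<lambda>_. 0)" "c \<noteq> (\<lambda>i. x i + c i)" "c \<noteq> (\<lambda>_. 0)"
    using F3_subspace_add[OF V x(1) c(1)] c(2) x(2,3) by (auto simp: fun_eq_iff intro!: exI[of _ i0])
  then obtain j where "j < n" "c j \<noteq> 0" "x j + c j = c j + c j"
    using trifferent_zero_triple[OF C(2) F3_subspace_zero[OF V] c(1)] by blast
  with x(3) show ?thesis
    by force
qed

lemma trifferent_card_sq_le:
  assumes C: "linear_code n C" "trifferent n C" and c: "c \<in> C" "c \<noteq> (\<lambda>_. 0)"
  shows "card C ^ 2 \<le> 3 ^ (weight n c + 1)"
proof -
  have V: "F3_subspace C" and CF: "C \<subseteq> F3_space n"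
    using C(1) by (auto simp: linear_code_iff)
  obtain i0 where i0: "c i0 \<noteq> 0"
    using c(2) by auto
  then have "i0 < n"
    using c(1) CF unfolding F3_space_def by (auto simp: not_less[symmetric])
  define V0 where "V0 = {x\<in>C. x i0 = 0}"
  define J where "J = {i. i < n \<and> c i \<noteq> 0} - {i0}"
  have fin: "finite V0" "finite J"
    using finite_linear_code[OF C(1)] unfolding V0_def J_def by auto
  have card_J: "card J + 1 = weight n c"
  proof -
    have "card {i. i < n \<and> c i \<noteq> 0} > 0"
      using i0 \<open>i0 < n\<close> by (auto simp: card_gt_0_iff)
    then show ?thesis
      unfolding J_def weight_def using i0 \<open>i0 < n\<close> by (simp add: card_Diff_singleton)
  qed
  have agree: "\<exists>j\<in>J. x j - c j = 0" if "x \<in> V0" "x \<noteq> (\<lambda>_. 0)" for x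
    using trifferent_agree_on_support[OF C c(1) i0, of x] that unfolding V0_def J_def by auto
  have "(\<Sum>x\<in>V0. \<Prod>j\<in>J. x j - c j) = (\<Prod>j\<in>J. 0 - c j)"
    using fin agree V0_def F3_subspace_zero[OF V]
    by (subst sum.remove[of _ "\<lambda>_. 0"]) (auto intro!: sum.neutral prod_zero)
  also have "\<dots> \<noteq> 0"
    using fin(2) unfolding J_def by (intro F3_prod_nonzero) auto
  finally have "card V0 ^ 2 \<le> 3 ^ card J"
    using sum_prod_F3_subspace_eq_0[OF fin(1) _ fin(2)] F3_subspace_hyperplane[OF V]
    unfolding V0_def by (meson not_le)
  moreover have "card C = 3 * card V0"
    unfolding V0_def by (rule card_F3_subspace_hyperplane[OF V c(1) i0])
  ultimately have "card C ^ 2 \<le> 9 * 3 ^ card J"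
    by (simp add: power_mult_distrib)
  also have "\<dots> = 3 ^ (weight n c + 1)"
    by (simp flip: card_J)
  finally show ?thesis .
qed

lemma trifferent_weight_gt:
  assumes "linear_code n C" "trifferent n C" and big: "3 powr s < real (card C)"
    and "y \<in> C" "y \<noteq> (\<lambda>_. 0)"
  shows "2 * s - 1 < real (weight n y)"
proof -
  have "3 powr (2 * s) = (3 powr s) ^ 2"
    by (simp add: power2_eq_square powr_add[symmetric])
  also have "\<dots> < real (card C) ^ 2"
    using big by (intro power_strict_mono) auto
  also have "\<dots> \<le> 3 ^ (weight n y + 1)"
    using trifferent_card_sq_le[OF assms(1,2,4,5)] by (metis of_nat_le_iff of_nat_numeral of_nat_power)
  also have "\<dots> = 3 powr real (weight n y + 1)"
    by (rule powr_realpow[symmetric]) simp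
  finally show ?thesis
    by simp
qed

section \<open>Characters and the Fourier transform\<close>

definition dot :: "nat \<Rightarrow> (nat \<Rightarrow> 3) \<Rightarrow> (nat \<Rightarrow> 3) \<Rightarrow> 3" where
  "dot n x y = (\<Sum>i<n. x i * y i)"

definition orthogonal :: "nat \<Rightarrow> (nat \<Rightarrow> 3) \<Rightarrow> (nat \<Rightarrow> 3) set \<Rightarrow> bool" where
  "orthogonal n u C \<longleftrightarrow> (\<forall>y\<in>C. dot n u y = 0)"

lemma dot_fun_upd: "i < n \<Longrightarrow> dot n (x(i := v)) y = dot n x y + (v - x i) * y i"
proof -
  assume "i < n"
  then have split: "dot n z y = z i * y i + (\<Sum>j\<in>{..<n} - {i}. z j * y j)" for z
    unfolding dot_def by (intro sum.remove) auto
  have "(\<Sum>j\<in>{..<n} - {i}. (x(i := v)) j * y j) = (\<Sum>j\<in>{..<n} - {i}. x j * y j)"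
    by (rule sum.cong) auto
  then show ?thesis
    unfolding split[of "x(i := v)"] split[of x] by (simp add: algebra_simps)
qed

lemma dot_add_right: "dot n u (\<lambda>i. y i + z i) = dot n u y + dot n u z"
  unfolding dot_def by (simp add: distrib_left sum.distrib)

lemma dot_diff_left: "dot n (\<lambda>i. x i - x' i) y = dot n x y - dot n x' y"
  unfolding dot_def by (simp add: left_diff_distrib sum_subtractf)

lemma dot_zero_right: "dot n x (\<lambda>_. 0) = 0"
  unfolding dot_def by simp

definition omega :: complex where
  "omega = Complex (- 1 / 2) (sqrt 3 / 2)"

definition chi :: "3 \<Rightarrow> complex" where
  "chi t = (if t = 0 then 1 else if t = 1 then omega else cnj omega)"

lemma omega_mult_self: "omega * omega = cnj omega"
  by (simp add: omega_def complex_eq_iff field_simps power2_eq_square)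

lemma omega_mult_cnj: "omega * cnj omega = 1"
  by (simp add: omega_def complex_eq_iff field_simps power2_eq_square)

lemma cnj_omega_mult_self: "cnj omega * cnj omega = omega"
  by (simp add: omega_def complex_eq_iff field_simps power2_eq_square)

lemma omega_add_cnj: "omega + cnj omega = - 1"
  by (simp add: omega_def complex_eq_iff)

lemma omega_neq_1: "omega \<noteq> 1" "cnj omega \<noteq> 1"
  by (simp_all add: omega_def complex_eq_iff)

lemma chi_simps [simp]: "chi 0 = 1" "chi 1 = omega" "chi 2 = cnj omega"
  by (simp_all add: chi_def)

lemma chi_add: "chi (a + b) = chi a * chi b"
  using F3_cases[of a] F3_cases[of b]
  by (elim disjE) (simp_all add: F3_numerals omega_mult_self omega_mult_cnj cnj_omega_mult_self mult.commute)

lemma cnj_chi: "cnj (chi a) = chi (- a)"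
  using F3_cases[of a] by (elim disjE) (simp_all add: F3_numerals)

lemma chi_neq_1: "a \<noteq> 0 \<Longrightarrow> chi a \<noteq> 1"
  using F3_cases[of a] omega_neq_1 by auto

lemma chi_neg_add_chi_neg_double: "chi (- t) + chi (- (2 * t)) = (if t = 0 then 2 else - 1)"
  using F3_cases[of t] by (elim disjE) (simp_all add: F3_numerals omega_add_cnj add.commute)

lemma sum_chi_dot_F3_subspace:
  assumes V: "F3_subspace C" and "finite C"
  shows "(\<Sum>y\<in>C. chi (dot n u y)) = (if orthogonal n u C then of_nat (card C) else 0)"
proof (cases "orthogonal n u C")
  case True
  then show ?thesis
    unfolding orthogonal_def by simp
next
  case False
  then obtain y0 where y0: "y0 \<in> C" "dot n u y0 \<noteq> 0"
    unfolding orthogonal_def by auto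
  have "(\<lambda>i. y i - y0 i) \<in> C" if "y \<in> C" for y
    using F3_subspace_add[OF V that F3_subspace_scale[OF V y0(1), of "- 1"]] by simp
  then have "bij_betw (\<lambda>y i. y i + y0 i) C C"
    using F3_subspace_add[OF V _ y0(1)]
    by (intro bij_betw_byWitness[where f' = "\<lambda>y i. y i - y0 i"]) auto
  then have "(\<Sum>y\<in>C. chi (dot n u y)) = (\<Sum>y\<in>C. chi (dot n u (\<lambda>i. y i + y0 i)))"
    using sum.reindex_bij_betw[of _ C C "\<lambda>y. chi (dot n u y)"] by simp
  also have "\<dots> = (\<Sum>y\<in>C. chi (dot n u y)) * chi (dot n u y0)"
    by (simp add: dot_add_right chi_add sum_distrib_right)
  finally have "(\<Sum>y\<in>C. chi (dot n u y)) * (1 - chi (dot n u y0)) = 0"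
    by (simp add: algebra_simps)
  with chi_neq_1[OF y0(2)] False show ?thesis
    by simp
qed

definition fourier :: "nat \<Rightarrow> ((nat \<Rightarrow> 3) \<Rightarrow> real) \<Rightarrow> (nat \<Rightarrow> 3) \<Rightarrow> complex" where
  "fourier n f y = (\<Sum>x\<in>F3_space n. of_real (f x) * chi (dot n x y))"

definition hamming_adj :: "nat \<Rightarrow> ((nat \<Rightarrow> 3) \<Rightarrow> real) \<Rightarrow> (nat \<Rightarrow> 3) \<Rightarrow> real" where
  "hamming_adj n f x = (\<Sum>i<n. f (x(i := x i + 1)) + f (x(i := x i + 2)))"

lemma bij_betw_F3_space_shift: "i < n \<Longrightarrow> bij_betw (\<lambda>x. x(i := x i + a)) (F3_space n) (F3_space n)"
  by (rule bij_betw_byWitness[where f' = "\<lambda>x. x(i := x i - a)"]) (auto simp: F3_space_def)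

lemma fourier_shift:
  assumes "i < n"
  shows "(\<Sum>x\<in>F3_space n. of_real (f (x(i := x i + a))) * chi (dot n x y))
    = chi (- (a * y i)) * fourier n f y"
proof -
  define G where "G x = of_real (f x) * chi (dot n x y) * chi (- (a * y i))" for x
  have "of_real (f (x(i := x i + a))) * chi (dot n x y) = G (x(i := x i + a))" for x
  proof -
    have "chi (dot n x y) = chi (dot n (x(i := x i + a)) y) * chi (- (a * y i))"
      unfolding dot_fun_upd[OF assms] by (simp add: chi_add[symmetric])
    then show ?thesis
      unfolding G_def by (simp add: mult.assoc)
  qed
  then have "(\<Sum>x\<in>F3_space n. of_real (f (x(i := x i + a))) * chi (dot n x y))
      = (\<Sum>x\<in>F3_space n. G (x(i := x i + a)))"
    by simp
  also have "\<dots> = (\<Sum>x\<in>F3_space n. G x)"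
    by (rule sum.reindex_bij_betw[OF bij_betw_F3_space_shift[OF assms]])
  finally show ?thesis
    unfolding fourier_def G_def by (simp add: sum_distrib_left mult.commute)
qed

lemma fourier_hamming_adj:
  "fourier n (hamming_adj n f) y = of_real (2 * real n - 3 * real (weight n y)) * fourier n f y"
proof -
  have "fourier n (hamming_adj n f) y = (\<Sum>i<n. \<Sum>x\<in>F3_space n.
      of_real (f (x(i := x i + 1))) * chi (dot n x y) + of_real (f (x(i := x i + 2))) * chi (dot n x y))"
    unfolding fourier_def hamming_adj_def
    by (simp add: sum_distrib_right distrib_right sum.swap[of _ "F3_space n"])
  also have "\<dots> = (\<Sum>i<n. (chi (- (1 * y i)) + chi (- (2 * y i))) * fourier n f y)"
    by (rule sum.cong[OF refl]) (simp add: sum.distrib fourier_shift distrib_right)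
  also have "\<dots> = (\<Sum>i<n. if y i = 0 then 2 else - 1) * fourier n f y"
    by (simp add: chi_neg_add_chi_neg_double sum_distrib_right)
  also have "(\<Sum>i<n. if y i = 0 then 2 else - 1) = (of_real (\<Sum>i<n. if y i = 0 then 2 else - 1) :: complex)"
    unfolding of_real_sum by (rule sum.cong) auto
  also have "(\<Sum>i<n. if y i = 0 then 2 else - 1) = 2 * real n - 3 * real (weight n y)"
    using weight_le[of n y] by (simp add: sum_if_eq_0_weight of_nat_diff)
  finally show ?thesis .
qed

definition dual_coset_form ::
    "nat \<Rightarrow> (nat \<Rightarrow> 3) set \<Rightarrow> ((nat \<Rightarrow> 3) \<Rightarrow> real) \<Rightarrow> ((nat \<Rightarrow> 3) \<Rightarrow> real) \<Rightarrow> real" where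
  "dual_coset_form n C g h = (\<Sum>x\<in>F3_space n. \<Sum>x'\<in>F3_space n.
     if orthogonal n (\<lambda>i. x i - x' i) C then g x * h x' else 0)"

lemma sum_fourier_mult_cnj:
  assumes "F3_subspace C" "finite C"
  shows "(\<Sum>y\<in>C. fourier n g y * cnj (fourier n h y)) = of_real (real (card C) * dual_coset_form n C g h)"
proof -
  let ?F = "F3_space n"
  have product: "of_real (g x) * chi (dot n x y) * cnj (of_real (h x') * chi (dot n x' y))
      = of_real (g x * h x') * chi (dot n (\<lambda>i. x i - x' i) y)" for x x' y
    by (simp add: dot_diff_left cnj_chi chi_add[symmetric] mult_ac)
  have "(\<Sum>y\<in>C. fourier n g y * cnj (fourier n h y)) = (\<Sum>y\<in>C. \<Sum>x\<in>?F. \<Sum>x'\<in>?F.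
      of_real (g x) * chi (dot n x y) * cnj (of_real (h x') * chi (dot n x' y)))"
    unfolding fourier_def cnj_sum sum_product ..
  also have "\<dots> = (\<Sum>y\<in>C. \<Sum>x\<in>?F. \<Sum>x'\<in>?F. of_real (g x * h x') * chi (dot n (\<lambda>i. x i - x' i) y))"
    unfolding product ..
  also have "\<dots> = (\<Sum>x\<in>?F. \<Sum>x'\<in>?F. \<Sum>y\<in>C. of_real (g x * h x') * chi (dot n (\<lambda>i. x i - x' i) y))"
    by (subst sum.swap) (rule sum.cong[OF refl], rule sum.swap)
  also have "\<dots> = (\<Sum>x\<in>?F. \<Sum>x'\<in>?F. of_real (g x * h x') * (\<Sum>y\<in>C. chi (dot n (\<lambda>i. x i - x' i) y)))"
    by (simp only: sum_distrib_left)
  also have "\<dots> = of_real (real (card C) * dual_coset_form n C g h)"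
    unfolding sum_chi_dot_F3_subspace[OF assms] dual_coset_form_def sum_distrib_left of_real_sum
    by (intro sum.cong refl) simp
  finally show ?thesis .
qed

lemma dual_coset_form_mono_left:
  assumes "\<forall>x\<in>F3_space n. g x \<le> g' x" and "\<forall>x. 0 \<le> h x"
  shows "dual_coset_form n C g h \<le> dual_coset_form n C g' h"
  unfolding dual_coset_form_def using assms by (intro sum_mono) (simp add: mult_right_mono)

lemma dual_coset_form_scale_left:
  "dual_coset_form n C (\<lambda>x. c * g x) h = c * dual_coset_form n C g h"
  unfolding dual_coset_form_def sum_distrib_left by (intro sum.cong refl) simp

lemma sum_square_le_dual_coset_form:
  assumes "\<forall>x. 0 \<le> f x"
  shows "(\<Sum>x\<in>F3_space n. f x ^ 2) \<le> dual_coset_form n C f f"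
  unfolding dual_coset_form_def
proof (rule sum_mono)
  fix x assume "x \<in> F3_space n"
  then have "(if orthogonal n (\<lambda>i. x i - x i) C then f x * f x else 0)
      \<le> (\<Sum>x'\<in>F3_space n. if orthogonal n (\<lambda>i. x i - x' i) C then f x * f x' else 0)"
    using assms by (intro member_le_sum) (auto simp: finite_F3_space)
  then show "f x ^ 2 \<le> (\<Sum>x'\<in>F3_space n. if orthogonal n (\<lambda>i. x i - x' i) C then f x * f x' else 0)"
    by (simp add: orthogonal_def dot_def power2_eq_square)
qed

section \<open>A linear programming bound\<close>

lemma sum_norm_fourier_sq:
  assumes "F3_subspace C" "finite C"
  shows "(\<Sum>y\<in>C. (cmod (fourier n f y))\<^sup>2) = real (card C) * dual_coset_form n C f f"
proof -
  have "of_real (\<Sum>y\<in>C. (cmod (fourier n f y))\<^sup>2) = (\<Sum>y\<in>C. fourier n f y * cnj (fourier n f y))"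
    unfolding of_real_sum complex_norm_square ..
  then show ?thesis
    unfolding sum_fourier_mult_cnj[OF assms] by (simp only: of_real_eq_iff)
qed

lemma sum_eigenvalue_norm_fourier_sq:
  assumes "F3_subspace C" "finite C"
  shows "(\<Sum>y\<in>C. (2 * real n - 3 * real (weight n y)) * (cmod (fourier n f y))\<^sup>2)
    = real (card C) * dual_coset_form n C (hamming_adj n f) f"
proof -
  have "of_real (\<Sum>y\<in>C. (2 * real n - 3 * real (weight n y)) * (cmod (fourier n f y))\<^sup>2)
      = (\<Sum>y\<in>C. fourier n (hamming_adj n f) y * cnj (fourier n f y))"
    unfolding of_real_sum of_real_mult complex_norm_square fourier_hamming_adj by (simp add: mult.assoc)
  then show ?thesis
    unfolding sum_fourier_mult_cnj[OF assms] by (simp only: of_real_eq_iff)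
qed

lemma sum_eigenvalue_norm_fourier_sq_le:
  assumes C: "linear_code n C"
    and dmin: "\<forall>y\<in>C. y \<noteq> (\<lambda>_. 0) \<longrightarrow> d \<le> real (weight n y)"
    and f_nonneg: "\<forall>x. 0 \<le> f x"
  shows "(\<Sum>y\<in>C. (2 * real n - 3 * real (weight n y)) * (cmod (fourier n f y))\<^sup>2)
    \<le> (2 * real n - 3 * d) * (\<Sum>y\<in>C. (cmod (fourier n f y))\<^sup>2) + 3 * d * (\<Sum>x\<in>F3_space n. f x)\<^sup>2"
proof -
  define m where "m y = (cmod (fourier n f y))\<^sup>2" for y
  have m_zero: "m (\<lambda>_. 0) = (\<Sum>x\<in>F3_space n. f x)\<^sup>2"
    using f_nonneg unfolding m_def fourier_def dot_zero_right
    by (simp add: sum_nonneg flip: of_real_sum)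
  have "(\<Sum>y\<in>C. (2 * real n - 3 * real (weight n y)) * m y)
      \<le> (\<Sum>y\<in>C. (2 * real n - 3 * d) * m y + (if y = (\<lambda>_. 0) then 3 * d * m y else 0))"
  proof (rule sum_mono)
    fix y assume "y \<in> C"
    show "(2 * real n - 3 * real (weight n y)) * m y
        \<le> (2 * real n - 3 * d) * m y + (if y = (\<lambda>_. 0) then 3 * d * m y else 0)"
    proof (cases "y = (\<lambda>_. 0)")
      case True
      then show ?thesis
        by (simp add: weight_def algebra_simps)
    next
      case False
      with \<open>y \<in> C\<close> dmin have "d \<le> real (weight n y)"
        by blast
      with False show ?thesis
        unfolding m_def by (simp add: mult_right_mono)
    qed
  qed
  also have "\<dots> = (2 * real n - 3 * d) * (\<Sum>y\<in>C. m y) + 3 * d * (\<Sum>x\<in>F3_space n. f x)\<^sup>2"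
    using finite_linear_code[OF C] F3_subspace_zero C m_zero
    by (simp add: sum.distrib sum_distrib_left linear_code_iff)
  finally show ?thesis
    unfolding m_def .
qed

lemma linear_code_test_function_bound:
  assumes C: "linear_code n C"
    and dmin: "\<forall>y\<in>C. y \<noteq> (\<lambda>_. 0) \<longrightarrow> d \<le> real (weight n y)"
    and f_nonneg: "\<forall>x. 0 \<le> f x"
    and eigen: "\<forall>x\<in>F3_space n. lam * f x \<le> hamming_adj n f x"
    and lam: "2 * real n - 3 * d \<le> lam"
  shows "(lam - 2 * real n + 3 * d) * real (card C) * (\<Sum>x\<in>F3_space n. f x ^ 2)
    \<le> 3 * d * (\<Sum>x\<in>F3_space n. f x) ^ 2"
proof -
  have V: "F3_subspace C" and fin: "finite C"
    using C finite_linear_code by (auto simp: linear_code_iff)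
  define B where "B = dual_coset_form n C f f"
  have "lam * B \<le> dual_coset_form n C (hamming_adj n f) f"
    using dual_coset_form_mono_left[of n "\<lambda>x. lam * f x" "hamming_adj n f" f C] eigen f_nonneg
    unfolding B_def dual_coset_form_scale_left by blast
  then have "real (card C) * (lam * B) \<le> real (card C) * dual_coset_form n C (hamming_adj n f) f"
    by (rule mult_left_mono) simp
  also have "\<dots> \<le> (2 * real n - 3 * d) * (real (card C) * B) + 3 * d * (\<Sum>x\<in>F3_space n. f x)\<^sup>2"
    using sum_eigenvalue_norm_fourier_sq_le[OF C dmin f_nonneg]
    unfolding sum_eigenvalue_norm_fourier_sq[OF V fin] sum_norm_fourier_sq[OF V fin] B_def .
  finally have "(lam - 2 * real n + 3 * d) * real (card C) * B \<le> 3 * d * (\<Sum>x\<in>F3_space n. f x)\<^sup>2"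
    by (simp add: algebra_simps)
  moreover have "(lam - 2 * real n + 3 * d) * real (card C) * (\<Sum>x\<in>F3_space n. f x ^ 2)
      \<le> (lam - 2 * real n + 3 * d) * real (card C) * B"
    using sum_square_le_dual_coset_form[OF f_nonneg] lam unfolding B_def
    by (intro mult_left_mono) auto
  ultimately show ?thesis
    by linarith
qed

lemma square_sum_le_card_mult_sum_squares:
  fixes g :: "'a \<Rightarrow> real"
  assumes "finite B"
  shows "(\<Sum>x\<in>B. g x)\<^sup>2 \<le> real (card B) * (\<Sum>x\<in>B. (g x)\<^sup>2)"
proof -
  have "0 \<le> (\<Sum>x\<in>B. \<Sum>y\<in>B. (g x - g y)\<^sup>2)"
    by (intro sum_nonneg) auto
  also have "\<dots> = (\<Sum>x\<in>B. \<Sum>y\<in>B. (g x)\<^sup>2 + (g y)\<^sup>2 - 2 * (g x * g y))"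
    by (intro sum.cong refl) (simp add: power2_eq_square algebra_simps)
  also have "\<dots> = 2 * real (card B) * (\<Sum>x\<in>B. (g x)\<^sup>2) - 2 * (\<Sum>x\<in>B. g x)\<^sup>2"
    by (simp add: sum_subtractf sum.distrib sum_distrib_left[symmetric] sum_distrib_right[symmetric] power2_eq_square)
  finally show ?thesis
    by simp
qed

lemma linear_code_card_le_of_test_function:
  assumes C: "linear_code n C"
    and dmin: "\<forall>y\<in>C. y \<noteq> (\<lambda>_. 0) \<longrightarrow> d \<le> real (weight n y)" and d: "0 \<le> d"
    and f_nonneg: "\<forall>x. 0 \<le> f x"
    and eigen: "\<forall>x\<in>F3_space n. lam * f x \<le> hamming_adj n f x"
    and gap: "2 * real n - 3 * d + 1 \<le> lam"
    and B: "B \<subseteq> F3_space n" "\<forall>x\<in>F3_space n - B. f x = 0"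
    and x0: "x0 \<in> F3_space n" "f x0 \<noteq> 0"
  shows "real (card C) \<le> 3 * d * real (card B)"
proof -
  let ?F = "F3_space n"
  have "finite B"
    using B(1) finite_F3_space finite_subset by blast
  have on_B: "(\<Sum>x\<in>?F. h (f x)) = (\<Sum>x\<in>B. h (f x))" if "h 0 = 0" for h :: "real \<Rightarrow> real"
    using B that by (intro sum.mono_neutral_right[OF finite_F3_space]) auto
  have pos: "0 < (\<Sum>x\<in>?F. (f x)\<^sup>2)"
    using x0 by (intro sum_pos2[OF finite_F3_space x0(1)]) auto
  have "real (card C) * (\<Sum>x\<in>?F. (f x)\<^sup>2) \<le> (lam - 2 * real n + 3 * d) * real (card C) * (\<Sum>x\<in>?F. (f x)\<^sup>2)"
    using gap pos mult_right_mono[of 1 "lam - 2 * real n + 3 * d" "real (card C)"]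
    by (intro mult_right_mono) auto
  also have "\<dots> \<le> 3 * d * (\<Sum>x\<in>?F. f x)\<^sup>2"
    using linear_code_test_function_bound[OF C dmin f_nonneg eigen] gap by simp
  also have "\<dots> \<le> 3 * d * (real (card B) * (\<Sum>x\<in>?F. (f x)\<^sup>2))"
    using on_B[of "\<lambda>t. t"] on_B[of "\<lambda>t. t\<^sup>2"] square_sum_le_card_mult_sum_squares[OF \<open>finite B\<close>, of f] d
    by (intro mult_left_mono) auto
  finally have "real (card C) * (\<Sum>x\<in>?F. (f x)\<^sup>2) \<le> (3 * d * real (card B)) * (\<Sum>x\<in>?F. (f x)\<^sup>2)"
    by (simp only: mult.assoc)
  then show ?thesis
    using pos by (rule mult_right_le_imp_le)
qed

section \<open>A radial test function\<close>

lemma weight_fun_upd_set: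
  "{j. j < n \<and> (x(i := a)) j \<noteq> 0} =
    (if i < n \<and> a \<noteq> 0 then insert i {j. j < n \<and> x j \<noteq> 0} else {j. j < n \<and> x j \<noteq> 0} - {i})"
  by auto

lemma weight_fun_upd_zero_nonzero: "i < n \<Longrightarrow> x i = 0 \<Longrightarrow> a \<noteq> 0 \<Longrightarrow> weight n (x(i := a)) = weight n x + 1"
  unfolding weight_def weight_fun_upd_set by simp

lemma weight_fun_upd_nonzero_nonzero: "i < n \<Longrightarrow> x i \<noteq> 0 \<Longrightarrow> a \<noteq> 0 \<Longrightarrow> weight n (x(i := a)) = weight n x"
  unfolding weight_def weight_fun_upd_set by (simp add: insert_absorb)

lemma weight_fun_upd_nonzero_zero: "i < n \<Longrightarrow> x i \<noteq> 0 \<Longrightarrow> weight n (x(i := 0)) = weight n x - 1"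
  unfolding weight_def weight_fun_upd_set by simp

lemma hamming_adj_radial:
  assumes x: "x \<in> F3_space n"
  shows "hamming_adj n (\<lambda>x. if x \<in> F3_space n then g (weight n x) else 0) x
    = real (n - weight n x) * (2 * g (weight n x + 1)) + real (weight n x) * (g (weight n x - 1) + g (weight n x))"
proof -
  let ?f = "\<lambda>x. if x \<in> F3_space n then g (weight n x) else 0"
  have in_F: "x(i := v) \<in> F3_space n" if "i < n" for i v
    using x that unfolding F3_space_def by auto
  have "?f (x(i := x i + 1)) + ?f (x(i := x i + 2))
      = (if x i = 0 then 2 * g (weight n x + 1) else g (weight n x - 1) + g (weight n x))" if i: "i < n" for i
  proof -
    consider "x i = 0" | "x i = 1" | "x i = 2"
      using F3_cases by blast
    then show ?thesis
    proof cases
      case 1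
      then show ?thesis
        using in_F[OF i] weight_fun_upd_zero_nonzero[OF i] by simp
    next
      case 2
      then have "x(i := x i + 1) = x(i := 2)" "x(i := x i + 2) = x(i := 0)"
        by (simp_all add: F3_numerals)
      then show ?thesis
        using in_F[OF i] weight_fun_upd_nonzero_nonzero[OF i] weight_fun_upd_nonzero_zero[OF i] 2
        by (simp add: add.commute)
    next
      case 3
      then have "x(i := x i + 1) = x(i := 0)" "x(i := x i + 2) = x(i := 1)"
        by (simp_all add: F3_numerals)
      then show ?thesis
        using in_F[OF i] weight_fun_upd_nonzero_nonzero[OF i] weight_fun_upd_nonzero_zero[OF i] 3
        by simp
    qed
  qed
  then have "hamming_adj n ?f x = (\<Sum>i<n. if x i = 0 then 2 * g (weight n x + 1) else g (weight n x - 1) + g (weight n x))"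
    unfolding hamming_adj_def by (intro sum.cong) auto
  then show ?thesis
    by (simp add: sum_if_eq_0_weight)
qed

text \<open>On the weights r, ..., r + m the profile is the principal eigenvector
  k \<mapsto> sin (pi (k + 1) / (m + 2)) of the path on m + 1 vertices, twisted by powers of \<beta>. A word of
  weight w in this window has at least A = 2 (n - r - m) neighbours of weight w + 1 and at least r
  neighbours of weight w - 1 and of weight w; the choice \<beta> = sqrt (r / A) symmetrises the two
  transition rates and yields the eigenvalue r + 2 sqrt (r A) cos (pi / (m + 2)).\<close>

definition radial_profile :: "nat \<Rightarrow> nat \<Rightarrow> real \<Rightarrow> nat \<Rightarrow> real" where
  "radial_profile r m \<beta> w =
    (if r \<le> w \<and> w \<le> r + m then \<beta> ^ (w - r) * sin (pi * real (w - r + 1) / real (m + 2)) else 0)"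

lemma radial_profile_nonneg:
  assumes "0 \<le> \<beta>"
  shows "0 \<le> radial_profile r m \<beta> w"
proof (cases "r \<le> w \<and> w \<le> r + m")
  case True
  then have "pi * real (w - r + 1) / real (m + 2) \<le> pi"
    by (simp add: divide_le_eq)
  then have "0 \<le> sin (pi * real (w - r + 1) / real (m + 2))"
    by (intro sin_ge_zero) auto
  then have "0 \<le> \<beta> ^ (w - r) * sin (pi * real (w - r + 1) / real (m + 2))"
    using assms by simp
  then show ?thesis
    unfolding radial_profile_def if_P[OF True] .
qed (auto simp: radial_profile_def)

lemma sin_add_sin_mult: "sin (a * real j) + sin (a * real (j + 2)) = 2 * sin (a * real (j + 1)) * cos a"
proof -
  have "sin (a * real (j + 1) - a) + sin (a * real (j + 1) + a) = 2 * sin (a * real (j + 1)) * cos a"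
    by (simp add: sin_add sin_diff)
  then show ?thesis
    by (simp add: algebra_simps)
qed

lemma radial_profile_window:
  fixes r m w :: nat
  assumes "1 \<le> r" "r \<le> w" "w \<le> r + m"
  defines "s \<equiv> \<lambda>k. sin (pi / real (m + 2) * real k)"
  shows "radial_profile r m \<beta> w = \<beta> ^ (w - r) * s (w - r + 1)"
    and "radial_profile r m \<beta> (w + 1) = \<beta> ^ (w - r + 1) * s (w - r + 2)"
    and "\<beta> * radial_profile r m \<beta> (w - 1) = \<beta> ^ (w - r) * s (w - r)"
proof -
  show "radial_profile r m \<beta> w = \<beta> ^ (w - r) * s (w - r + 1)"
    using assms(2,3) unfolding radial_profile_def s_def by (simp add: mult.commute)
  show "radial_profile r m \<beta> (w + 1) = \<beta> ^ (w - r + 1) * s (w - r + 2)"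
  proof (cases "w = r + m")
    case True
    then show ?thesis
      unfolding radial_profile_def s_def by simp
  next
    case False
    then show ?thesis
      using assms(2,3) unfolding radial_profile_def s_def by (simp add: Suc_diff_le mult.commute)
  qed
  show "\<beta> * radial_profile r m \<beta> (w - 1) = \<beta> ^ (w - r) * s (w - r)"
  proof (cases "w = r")
    case True
    then show ?thesis
      using assms(1) unfolding radial_profile_def s_def by auto
  next
    case False
    then have "r \<le> w - 1" "w - 1 \<le> r + m" "w - 1 - r + 1 = w - r" "w - r = Suc (w - 1 - r)"
      using assms(2,3) by auto
    then have "radial_profile r m \<beta> (w - 1) = \<beta> ^ (w - 1 - r) * s (w - r)"
      unfolding radial_profile_def s_def by (simp add: mult.commute)
    then show ?thesis
      using \<open>w - r = Suc (w - 1 - r)\<close> by simp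
  qed
qed

lemma radial_profile_recurrence:
  fixes n r m w :: nat
  assumes r: "1 \<le> r" and n: "r + m < n" and w: "r \<le> w" "w \<le> r + m"
  defines "A \<equiv> 2 * real (n - r - m)"
  defines "\<beta> \<equiv> sqrt (real r * A) / A"
  defines "lam \<equiv> real r + 2 * sqrt (real r * A) * cos (pi / real (m + 2))"
  defines "\<phi> \<equiv> radial_profile r m \<beta>"
  shows "lam * \<phi> w = A * \<phi> (w + 1) + real r * (\<phi> (w - 1) + \<phi> w)"
proof -
  define \<gamma> where "\<gamma> = sqrt (real r * A)"
  define s where "s = (\<lambda>k. sin (pi / real (m + 2) * real k))"
  define j where "j = w - r"
  have "0 < A"
    unfolding A_def using n by simp
  then have A_\<beta>: "A * \<beta> = \<gamma>" and \<gamma>_\<beta>: "\<gamma> * \<beta> = real r"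
    unfolding \<beta>_def \<gamma>_def by (simp_all add: field_simps)
  have window: "\<phi> w = \<beta> ^ j * s (j + 1)" "\<phi> (w + 1) = \<beta> ^ (j + 1) * s (j + 2)"
    "\<beta> * \<phi> (w - 1) = \<beta> ^ j * s j"
    using radial_profile_window[OF r w] unfolding \<phi>_def s_def j_def by simp_all
  have recurrence: "2 * s (j + 1) * cos (pi / real (m + 2)) = s j + s (j + 2)"
    unfolding s_def by (rule sin_add_sin_mult[symmetric])
  have "lam * \<phi> w = real r * \<phi> w + \<gamma> * \<beta> ^ j * (2 * s (j + 1) * cos (pi / real (m + 2)))"
    unfolding lam_def window(1) \<gamma>_def by (simp add: algebra_simps)
  also have "\<dots> = \<gamma> * (\<beta> ^ j * s j) + A * \<beta> * (\<beta> ^ j * s (j + 2)) + real r * \<phi> w"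
    unfolding recurrence A_\<beta> by (simp add: algebra_simps)
  also have "\<dots> = A * \<phi> (w + 1) + real r * (\<phi> (w - 1) + \<phi> w)"
    unfolding window(2) window(3)[symmetric] using \<gamma>_\<beta> by (simp add: algebra_simps)
  finally show ?thesis .
qed

lemma radial_profile_eigen:
  fixes n r m w :: nat
  assumes r: "1 \<le> r" and n: "r + m < n" and w: "w \<le> n"
  defines "A \<equiv> 2 * real (n - r - m)"
  defines "\<beta> \<equiv> sqrt (real r * A) / A"
  defines "lam \<equiv> real r + 2 * sqrt (real r * A) * cos (pi / real (m + 2))"
  defines "\<phi> \<equiv> radial_profile r m \<beta>"
  shows "lam * \<phi> w \<le> real (n - w) * (2 * \<phi> (w + 1)) + real w * (\<phi> (w - 1) + \<phi> w)"
proof -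
  have "0 \<le> \<beta>"
    unfolding \<beta>_def A_def by simp
  then have \<phi>_nonneg: "0 \<le> \<phi> k" for k
    unfolding \<phi>_def by (rule radial_profile_nonneg)
  show ?thesis
  proof (cases "r \<le> w \<and> w \<le> r + m")
    case False
    then have "\<phi> w = 0"
      unfolding \<phi>_def radial_profile_def by auto
    then show ?thesis
      using \<phi>_nonneg[of "w + 1"] \<phi>_nonneg[of "w - 1"] by simp
  next
    case True
    have "lam * \<phi> w = A * \<phi> (w + 1) + real r * (\<phi> (w - 1) + \<phi> w)"
      unfolding A_def \<beta>_def lam_def \<phi>_def using True by (intro radial_profile_recurrence[OF r n]) auto
    also have "\<dots> \<le> real (n - w) * (2 * \<phi> (w + 1)) + real w * (\<phi> (w - 1) + \<phi> w)"
    proof (rule add_mono)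
      have "A \<le> real (n - w) * 2"
        unfolding A_def using True n by simp
      then show "A * \<phi> (w + 1) \<le> real (n - w) * (2 * \<phi> (w + 1))"
        using \<phi>_nonneg[of "w + 1"] by (simp add: mult_right_mono mult.assoc[symmetric])
      show "real r * (\<phi> (w - 1) + \<phi> w) \<le> real w * (\<phi> (w - 1) + \<phi> w)"
        using True \<phi>_nonneg[of "w - 1"] \<phi>_nonneg[of w] by (intro mult_right_mono) auto
    qed
    finally show ?thesis .
  qed
qed

lemma linear_code_card_le_ball:
  fixes n r m :: nat
  assumes C: "linear_code n C" and r: "1 \<le> r" and n: "r + m < n"
    and dmin: "\<forall>y\<in>C. y \<noteq> (\<lambda>_. 0) \<longrightarrow> d \<le> real (weight n y)" and d: "0 \<le> d"
    and gap: "1 \<le> real r + 2 * sqrt (real r * (2 * real (n - r - m))) * cos (pi / real (m + 2)) - 2 * real n + 3 * d"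
  shows "real (card C) \<le> 3 * d * real (card {x\<in>F3_space n. weight n x \<le> r + m})"
proof -
  define A where "A = 2 * real (n - r - m)"
  define \<beta> where "\<beta> = sqrt (real r * A) / A"
  define lam where "lam = real r + 2 * sqrt (real r * A) * cos (pi / real (m + 2))"
  define f where "f = (\<lambda>x. if x \<in> F3_space n then radial_profile r m \<beta> (weight n x) else 0)"
  define x0 :: "nat \<Rightarrow> 3" where "x0 = (\<lambda>i. if i < r then 1 else 0)"
  have "0 \<le> \<beta>"
    unfolding \<beta>_def A_def by simp
  then have f_nonneg: "\<forall>x. 0 \<le> f x"
    unfolding f_def using radial_profile_nonneg by simp
  have eigen: "\<forall>x\<in>F3_space n. lam * f x \<le> hamming_adj n f x"
  proof
    fix x assume x: "x \<in> F3_space n"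
    show "lam * f x \<le> hamming_adj n f x"
      using radial_profile_eigen[OF r n weight_le[of n x]] x
      unfolding f_def hamming_adj_radial[OF x] lam_def \<beta>_def A_def by simp
  qed
  have "x0 \<in> F3_space n" "{i. i < n \<and> x0 i \<noteq> 0} = {..<r}"
    unfolding x0_def F3_space_def using n by auto
  moreover have "0 < sin (pi / real (m + 2))"
    by (intro sin_gt_zero) (auto simp: divide_less_eq)
  ultimately have x0: "x0 \<in> F3_space n" "f x0 \<noteq> 0"
    unfolding f_def radial_profile_def weight_def by simp_all
  show ?thesis
    using gap x0 unfolding lam_def A_def
    by (intro linear_code_card_le_of_test_function[OF C dmin d f_nonneg eigen _ _ _ x0])
       (auto simp: f_def radial_profile_def lam_def A_def)
qed

section \<open>Numerical estimates\<close>

lemma ln_4_div_3_ge: "2853869 / 9920232 \<le> ln (4 / 3 :: real)"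
proof -
  have "(\<Sum>i=0..<2 * 5. (- 1) ^ i * (1 / real (i + 1)) * (1 / 3 :: real) ^ Suc i) \<le> ln (1 / 3 + 1)"
    by (rule ln_bounds(1)) auto
  then show ?thesis
    by (simp add: eval_nat_numeral atLeast0LessThan lessThan_Suc)
qed

lemma ln_9_div_8_ge: "308761 / 2621440 \<le> ln (9 / 8 :: real)"
proof -
  have "(\<Sum>i=0..<2 * 3. (- 1) ^ i * (1 / real (i + 1)) * (1 / 8 :: real) ^ Suc i) \<le> ln (1 / 8 + 1)"
    by (rule ln_bounds(1)) auto
  then show ?thesis
    by (simp add: eval_nat_numeral atLeast0LessThan lessThan_Suc)
qed

lemma ln_19_div_18_le: "ln (19 / 18 :: real) \<le> 1021637 / 18895680"
proof -
  have "ln (1 / 18 + 1) \<le> (\<Sum>i=0..<2 * 2 + 1. (- 1) ^ i * (1 / real (i + 1)) * (1 / 18 :: real) ^ Suc i)"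
    by (rule ln_bounds(2)) auto
  then show ?thesis
    by (simp add: eval_nat_numeral atLeast0LessThan lessThan_Suc)
qed

text \<open>The margin is only about 1.5e-4. Since (4/3)^3 (9/8)^2 = 3 and (4/3)^10 (9/8)^6 = 36, all
  logarithms are expressed through ln (1 + x) with small x, where the alternating series converges fast.\<close>

lemma ln_margin_pos: "0 < 20 / 91 * ln (3::real) - ln (19 / 18) - 209 / 4000 * ln 36"
proof -
  have "ln (3::real) = ln ((4 / 3) ^ 3 * (9 / 8) ^ 2)" and "ln (36::real) = ln ((4 / 3) ^ 10 * (9 / 8) ^ 6)"
    by (simp_all add: power_divide)
  then have "ln (3::real) = 3 * ln (4 / 3) + 2 * ln (9 / 8)" and "ln (36::real) = 10 * ln (4 / 3) + 6 * ln (9 / 8)"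
    by (simp_all only: ln_mult ln_realpow) simp_all
  then show ?thesis
    using ln_4_div_3_ge ln_9_div_8_ge ln_19_div_18_le by linarith
qed

lemma cos_ge_1_minus_sq_div_2:
  fixes x :: real
  assumes "0 \<le> x" "x \<le> pi"
  shows "1 - x\<^sup>2 / 2 \<le> cos x"
proof -
  have "0 \<le> sin (x / 2)" "sin (x / 2) \<le> x / 2"
    using assms sin_x_le_x[of "x / 2"] by (auto intro: sin_ge_zero)
  then have "sin (x / 2) ^ 2 \<le> (x / 2)\<^sup>2"
    by (intro power_mono)
  then show ?thesis
    using cos_double_sin[of "x / 2"] by (simp add: power_divide)
qed

lemma cos_pi_div_200_ge: "4999 / 5000 \<le> cos (pi / 200)"
proof -
  have "1 - (pi / 200)\<^sup>2 / 2 \<le> cos (pi / 200)"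
    by (rule cos_ge_1_minus_sq_div_2) auto
  moreover have "(pi / 200)\<^sup>2 \<le> (4 / 200)\<^sup>2"
    using pi_less_4 by (intro power_mono) auto
  ultimately show ?thesis
    by (simp add: power2_eq_square)
qed

lemma weight_fraction_poly_ineq:
  fixes t :: real
  assumes "1000000 \<le> t"
  shows "(228981 / 364000 * t + 4)\<^sup>2 \<le> (4999 / 5000)\<^sup>2 * (8 * (209 / 4000 * t * (3791 / 4000 * t - 199)))"
proof -
  define P where "P = t * t"
  have "1000000 * t \<le> P"
    unfolding P_def using assms by (intro mult_right_mono) auto
  moreover have "(228981 / 364000 * t + 4)\<^sup>2 = 52432298361 / 132496000000 * P + 228981 / 45500 * t + 16"
    unfolding P_def by (simp add: power2_eq_square algebra_simps)
  moreover have "(4999 / 5000)\<^sup>2 * (8 * (209 / 4000 * t * (3791 / 4000 * t - 199)))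
      = 19800052602319 / 50000000000000 * P - 1039359131591 / 12500000000 * t"
    unfolding P_def by (simp add: power2_eq_square algebra_simps)
  ultimately show ?thesis
    using assms by linarith
qed

lemma gap_at_weight_fraction:
  fixes n :: nat
  assumes n: "1000000 \<le> n"
  defines "r \<equiv> nat \<lceil>209 / 4000 * real n\<rceil>"
  shows "1 \<le> r" and "r + 198 < n"
    and "1 \<le> real r + 2 * sqrt (real r * (2 * real (n - r - 198))) * cos (pi / 200)
      - 2 * real n + 3 * (40 * real n / 91 - 1)"
proof -
  define t where "t = real n"
  define M where "M = real (n - r - 198)"
  define c where "c = cos (pi / 200)"
  have t: "1000000 \<le> t"
    unfolding t_def using n by simp
  have r_lower: "209 / 4000 * t \<le> real r" and r_upper: "real r \<le> 209 / 4000 * t + 1"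
    unfolding r_def t_def by linarith+
  show "1 \<le> r"
    using r_lower t by linarith
  show "r + 198 < n"
    using r_upper t unfolding t_def by linarith
  then have M: "3791 / 4000 * t - 199 \<le> M"
    using r_upper unfolding M_def t_def by (simp add: of_nat_diff)
  have M_nonneg: "0 \<le> M"
    using M t by linarith
  have c: "4999 / 5000 \<le> c"
    unfolding c_def by (rule cos_pi_div_200_ge)
  have "(228981 / 364000 * t + 4)\<^sup>2 \<le> (4999 / 5000)\<^sup>2 * (8 * (209 / 4000 * t * (3791 / 4000 * t - 199)))"
    using t by (rule weight_fraction_poly_ineq)
  also have "\<dots> \<le> c\<^sup>2 * (8 * (real r * M))"
    using c r_lower M t by (intro mult_mono power_mono mult_left_mono) auto
  also have "\<dots> = (2 * sqrt (real r * (2 * M)) * c)\<^sup>2"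
    using M_nonneg by (simp add: power_mult_distrib)
  finally have "228981 / 364000 * t + 4 \<le> 2 * sqrt (real r * (2 * M)) * c"
    by (rule power2_le_imp_le) (use c M_nonneg in simp)
  then show "1 \<le> real r + 2 * sqrt (real r * (2 * real (n - r - 198))) * cos (pi / 200)
      - 2 * real n + 3 * (40 * real n / 91 - 1)"
    using r_lower unfolding M_def c_def t_def by simp
qed

lemma eventually_ln_add_lt_mult:
  fixes \<kappa> K :: real
  assumes "0 < \<kappa>"
  shows "\<forall>\<^sub>F n in sequentially. ln (real n) + K < real n * \<kappa>"
proof -
  have "(\<lambda>n. real n / exp \<kappa> ^ n) \<longlonglongrightarrow> 0"
    using assms by (intro lim_n_over_pown) simp
  then have "\<forall>\<^sub>F n in sequentially. real n / exp \<kappa> ^ n < exp (- K)"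
    by (rule order_tendstoD) simp
  moreover have "\<forall>\<^sub>F n in sequentially. 1 \<le> n"
    by (rule eventually_ge_at_top)
  ultimately show ?thesis
  proof eventually_elim
    case (elim n)
    then have "real n < exp (- K) * exp \<kappa> ^ n"
      by (simp add: divide_less_eq)
    also have "\<dots> = exp (real n * \<kappa> - K)"
      by (simp add: exp_of_nat_mult[symmetric] exp_add[symmetric])
    finally have "ln (real n) < ln (exp (real n * \<kappa> - K))"
      using elim by (subst ln_less_cancel_iff) auto
    then show ?case
      by simp
  qed
qed

lemma eventually_explicit_bound_lt:
  "\<forall>\<^sub>F n in sequentially.
    3 * (40 * real n / 91 - 1) * (19 / 18) ^ n * 36 ^ (nat \<lceil>209 / 4000 * real n\<rceil> + 198)
      < 3 powr (20 * real n / 91)"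
  using eventually_ln_add_lt_mult[OF ln_margin_pos, of "ln 3 + 199 * ln 36"]
    eventually_ge_at_top[of 1000]
proof eventually_elim
  case (elim n)
  define t where "t = real n"
  define d where "d = 40 * t / 91 - 1"
  define r where "r = nat \<lceil>209 / 4000 * t\<rceil>"
  have "0 < d" "d \<le> t"
    using elim(2) unfolding d_def t_def by simp_all
  have "real r \<le> 209 / 4000 * t + 1"
    unfolding r_def t_def by linarith
  then have "real (r + 198) * ln 36 \<le> (209 / 4000 * t + 199) * ln (36::real)"
    by (intro mult_right_mono) simp_all
  moreover have "ln d \<le> ln t"
    using \<open>0 < d\<close> \<open>d \<le> t\<close> by simp
  ultimately have "ln (3 * d * (19 / 18) ^ n * 36 ^ (r + 198)) < ln (3 powr (20 * t / 91))"
    using \<open>0 < d\<close> elim(1) unfolding t_def by (simp add: ln_mult ln_realpow algebra_simps)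
  then have "3 * d * (19 / 18) ^ n * 36 ^ (r + 198) < 3 powr (20 * t / 91)"
    using \<open>0 < d\<close> by (subst (asm) ln_less_cancel_iff) auto
  then show ?case
    unfolding d_def r_def t_def .
qed

lemma linear_code_card_le_explicit:
  fixes n :: nat
  assumes n: "1000000 \<le> n" and C: "linear_code n C"
    and dmin: "\<forall>y\<in>C. y \<noteq> (\<lambda>_. 0) \<longrightarrow> 40 * real n / 91 - 1 \<le> real (weight n y)"
  shows "real (card C) \<le> 3 * (40 * real n / 91 - 1) * (19 / 18) ^ n * 36 ^ (nat \<lceil>209 / 4000 * real n\<rceil> + 198)"
proof -
  define r where "r = nat \<lceil>209 / 4000 * real n\<rceil>"
  define d where "d = 40 * real n / 91 - 1"
  define ball where "ball = {x\<in>F3_space n. weight n x \<le> r + 198}"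
  have d: "0 \<le> d"
    unfolding d_def using n by simp
  note gap = gap_at_weight_fraction[OF n, folded r_def d_def]
  have "real (card C) \<le> 3 * d * real (card ball)"
    unfolding ball_def using gap dmin d
    by (intro linear_code_card_le_ball[OF C gap(1,2)]) (simp_all add: d_def)
  also have "real (card ball) \<le> (19 / 18) ^ n * 36 ^ (r + 198)"
    using card_weight_ball_le[of "1 / 36" n "r + 198"]
    unfolding ball_def by (simp add: power_one_over divide_le_eq)
  then have "3 * d * real (card ball) \<le> 3 * d * ((19 / 18) ^ n * 36 ^ (r + 198))"
    using d by (intro mult_left_mono) auto
  finally show ?thesis
    unfolding r_def d_def by (simp add: mult.assoc)
qed

theorem theorem1p5:
  shows "\<exists>N::nat. \<forall>n\<ge>N. \<forall>C. linear_code n C \<and> trifferent n C \<longrightarrow>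
           real (card C) \<le> 3 powr (real n / 4.55)"
proof -
  obtain N where N: "\<And>n. N \<le> n \<Longrightarrow> 3 * (40 * real n / 91 - 1) * (19 / 18) ^ n
      * 36 ^ (nat \<lceil>209 / 4000 * real n\<rceil> + 198) < 3 powr (20 * real n / 91)"
    using eventually_explicit_bound_lt unfolding eventually_sequentially by blast
  show ?thesis
  proof (intro exI[of _ "max N 1000000"] allI impI)
    fix n C
    assume n: "max N 1000000 \<le> n" and C: "linear_code n C \<and> trifferent n C"
    show "real (card C) \<le> 3 powr (real n / 4.55)"
    proof (rule ccontr)
      assume "\<not> ?thesis"
      moreover have "real n / 4.55 = 20 * real n / 91"
        by simp
      ultimately have big: "3 powr (20 * real n / 91) < real (card C)"
        by (simp only: not_le)
      have "\<forall>y\<in>C. y \<noteq> (\<lambda>_. 0) \<longrightarrow> 40 * real n / 91 - 1 \<le> real (weight n y)"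
        using C trifferent_weight_gt[OF _ _ big] by fastforce
      then have "real (card C) \<le> 3 * (40 * real n / 91 - 1) * (19 / 18) ^ n
          * 36 ^ (nat \<lceil>209 / 4000 * real n\<rceil> + 198)"
        using n C by (intro linear_code_card_le_explicit) auto
      with N[of n] n big show False
        by simp
    qed
  qed
qed

end
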